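(* Consider $n$ parallel roads (indexed by $i\in[n]$) shared by $m$ vehicle types (indexed by $j\in[m]$), vehicle type $j$ having demand $\bar f^j\ge0$. A feasible routing is $f=(f^j_i)$ with $f^j_i\ge0$ and $\sum_i f^j_i=\bar f^j$ for each $j$. Road $i$ has latency $\ell_i(f)=b_i+\sum_j a^j_i f^j_i$ with constants $a^j_i\ge0$, $b_i\ge0$, and the social cost is $J(f)=\sum_i\big(\sum_j f^j_i\big)\ell_i(f)$. Then there exists a feasible routing $f$ minimizing $J$ such that no two distinct vehicle types $j\neq j'$ share more than one road with positive flow of both, i.e. there are no two distinct roads $i\neq i'$ with $f^j_i,f^{j'}_i,f^j_{i'},f^{j'}_{i'}>0$.
   Context: Parallel-road network with multiple vehicle types, affine road latencies with type-dependent coefficients, and social cost equal to total latency. *)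

theory Defs
  imports Complex_Main
begin

text \<open>Roads are indexed by i < n, vehicle types by j < m. A routing is
  f i j = flow of vehicle type j on road i.\<close>

definition feasible_routing ::
  "nat \<Rightarrow> nat \<Rightarrow> (nat \<Rightarrow> real) \<Rightarrow> (nat \<Rightarrow> nat \<Rightarrow> real) \<Rightarrow> bool" where
  "feasible_routing n m dem f \<longleftrightarrow>
     (\<forall>i<n. \<forall>j<m. f i j \<ge> 0) \<and> (\<forall>j<m. (\<Sum>i<n. f i j) = dem j)"

definition latency ::
  "nat \<Rightarrow> (nat \<Rightarrow> nat \<Rightarrow> real) \<Rightarrow> (nat \<Rightarrow> real) \<Rightarrow> (nat \<Rightarrow> nat \<Rightarrow> real) \<Rightarrow> nat \<Rightarrow> real" where
  "latency m a b f i = b i + (\<Sum>j<m. a i j * f i j)"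

definition social_cost ::
  "nat \<Rightarrow> nat \<Rightarrow> (nat \<Rightarrow> nat \<Rightarrow> real) \<Rightarrow> (nat \<Rightarrow> real) \<Rightarrow> (nat \<Rightarrow> nat \<Rightarrow> real) \<Rightarrow> real" where
  "social_cost n m a b f = (\<Sum>i<n. (\<Sum>j<m. f i j) * latency m a b f i)"

end

theory Submission
  imports Defs "HOL-Analysis.Analysis"
begin

text \<open>The feasible routings form a compact polytope, so an optimal routing exists. If types j, j'
  both use roads i, i', move t units of type j from road i to i' and t units of type j' from i' to
  i. Every road total stays fixed, so each latency, and hence the social cost, is affine in t. At
  an optimum the move is feasible for small t of either sign, so the cost is constant along it;
  pushing t until one of the four flows vanishes gives an optimum with strictly smaller support.
  An optimum of minimal support thus has no such pair of types. Neither step uses the signs of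
  the coefficients a and b.\<close>

definition optimal_routing ::
  "nat \<Rightarrow> nat \<Rightarrow> (nat \<Rightarrow> real) \<Rightarrow> (nat \<Rightarrow> nat \<Rightarrow> real) \<Rightarrow> (nat \<Rightarrow> real) \<Rightarrow>
   (nat \<Rightarrow> nat \<Rightarrow> real) \<Rightarrow> bool" where
  "optimal_routing n m dem a b f \<longleftrightarrow> feasible_routing n m dem f \<and>
     (\<forall>g. feasible_routing n m dem g \<longrightarrow> social_cost n m a b f \<le> social_cost n m a b g)"

definition routing_support :: "nat \<Rightarrow> nat \<Rightarrow> (nat \<Rightarrow> nat \<Rightarrow> real) \<Rightarrow> (nat \<times> nat) set" where
  "routing_support n m f = {(i, j). i < n \<and> j < m \<and> f i j > 0}"

definition support_has_4cycle :: "nat \<Rightarrow> nat \<Rightarrow> (nat \<Rightarrow> nat \<Rightarrow> real) \<Rightarrow> bool" where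
  "support_has_4cycle n m f \<longleftrightarrow> (\<exists>j<m. \<exists>j'<m. \<exists>i<n. \<exists>i'<n. j \<noteq> j' \<and> i \<noteq> i' \<and>
     f i j > 0 \<and> f i j' > 0 \<and> f i' j > 0 \<and> f i' j' > 0)"

definition swap_cycle :: "nat \<Rightarrow> nat \<Rightarrow> nat \<Rightarrow> nat \<Rightarrow> nat \<Rightarrow> nat \<Rightarrow> real" where
  "swap_cycle i i' j j' k l =
     ((if k = i then 1 else 0) - (if k = i' then 1 else 0)) * ((if l = j' then 1 else 0) - (if l = j then 1 else 0))"

lemma finite_routing_support: "finite (routing_support n m f)"
  by (rule finite_subset[of _ "{..<n} \<times> {..<m}"]) (auto simp: routing_support_def)

lemma social_cost_add_road_balanced:
  assumes "\<forall>k<n. (\<Sum>l<m. d k l) = 0"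
  shows "social_cost n m a b (\<lambda>k l. f k l + t * d k l) =
         social_cost n m a b f + t * (\<Sum>k<n. (\<Sum>l<m. f k l) * (\<Sum>l<m. a k l * d k l))"
proof -
  have total: "(\<Sum>l<m. f k l + t * d k l) = (\<Sum>l<m. f k l)" if "k < n" for k
    using assms that by (simp add: sum.distrib sum_distrib_left[symmetric])
  have lat: "latency m a b (\<lambda>k l. f k l + t * d k l) k = latency m a b f k + t * (\<Sum>l<m. a k l * d k l)" for k
    by (simp add: latency_def algebra_simps sum.distrib sum_distrib_left)
  have "social_cost n m a b (\<lambda>k l. f k l + t * d k l) =
     (\<Sum>k<n. (\<Sum>l<m. f k l) * (latency m a b f k + t * (\<Sum>l<m. a k l * d k l)))"
    unfolding social_cost_def by (rule sum.cong) (simp_all add: total lat)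
  also have "\<dots> = social_cost n m a b f + t * (\<Sum>k<n. (\<Sum>l<m. f k l) * (\<Sum>l<m. a k l * d k l))"
    unfolding social_cost_def by (simp add: distrib_left sum.distrib sum_distrib_left mult.left_commute)
  finally show ?thesis .
qed

lemma optimal_routing_cost_constant:
  assumes opt: "optimal_routing n m dem a b f"
    and balanced: "\<forall>k<n. (\<Sum>l<m. d k l) = 0"
    and "\<mu> > 0"
    and plus: "feasible_routing n m dem (\<lambda>k l. f k l + \<mu> * d k l)"
    and minus: "feasible_routing n m dem (\<lambda>k l. f k l + (- \<mu>) * d k l)"
  shows "social_cost n m a b (\<lambda>k l. f k l + t * d k l) = social_cost n m a b f"
proof -
  define c where "c = (\<Sum>k<n. (\<Sum>l<m. f k l) * (\<Sum>l<m. a k l * d k l))"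
  have shift: "social_cost n m a b (\<lambda>k l. f k l + s * d k l) = social_cost n m a b f + s * c" for s
    unfolding c_def by (rule social_cost_add_road_balanced[OF balanced])
  have "0 \<le> \<mu> * c" "0 \<le> - \<mu> * c"
    using opt plus minus shift[of \<mu>] shift[of "- \<mu>"] unfolding optimal_routing_def by fastforce+
  with \<open>\<mu> > 0\<close> have "c = 0"
    by (simp add: zero_le_mult_iff mult_le_0_iff)
  then show ?thesis by (simp add: shift)
qed

lemma swap_cycle_road_sum:
  assumes "j < m" "j' < m"
  shows "(\<Sum>l<m. swap_cycle i i' j j' k l) = 0"
  using assms by (simp add: swap_cycle_def sum_subtractf flip: sum_distrib_left)

lemma swap_cycle_type_sum:
  assumes "i < n" "i' < n"
  shows "(\<Sum>k<n. swap_cycle i i' j j' k l) = 0"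
  using assms by (simp add: swap_cycle_def sum_subtractf flip: sum_distrib_right)

lemma feasible_routing_add_swap_cycle:
  assumes feas: "feasible_routing n m dem f"
    and idx: "i < n" "i' < n" "j < m" "j' < m" "i \<noteq> i'" "j \<noteq> j'"
    and "t \<le> f i j" "t \<le> f i' j'" "- t \<le> f i j'" "- t \<le> f i' j"
  shows "feasible_routing n m dem (\<lambda>k l. f k l + t * swap_cycle i i' j j' k l)"
  unfolding feasible_routing_def
proof (intro conjI allI impI)
  fix k l assume "k < n" "l < m"
  then show "0 \<le> f k l + t * swap_cycle i i' j j' k l"
    using feas assms(8-) idx(5,6) by (auto simp: feasible_routing_def swap_cycle_def)
next
  fix l assume "l < m"
  then show "(\<Sum>k<n. f k l + t * swap_cycle i i' j j' k l) = dem l"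
    using feas swap_cycle_type_sum[OF idx(1,2)]
    by (simp add: feasible_routing_def sum.distrib flip: sum_distrib_left)
qed

lemma optimal_routing_shrink_support:
  assumes opt: "optimal_routing n m dem a b f" and "support_has_4cycle n m f"
  shows "\<exists>g. optimal_routing n m dem a b g \<and> routing_support n m g \<subset> routing_support n m f"
proof -
  obtain j j' i i' where idx: "i < n" "i' < n" "j < m" "j' < m" "i \<noteq> i'" "j \<noteq> j'"
    and pos: "f i j > 0" "f i j' > 0" "f i' j > 0" "f i' j' > 0"
    using assms(2) unfolding support_has_4cycle_def by blast
  have feas: "feasible_routing n m dem f"
    using opt unfolding optimal_routing_def by blast
  let ?d = "swap_cycle i i' j j'"
  have balanced: "\<forall>k<n. (\<Sum>l<m. ?d k l) = 0"
    using swap_cycle_road_sum idx(3,4) by blast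
  define \<mu> where "\<mu> = min (min (f i j) (f i' j')) (min (f i j') (f i' j))"
  have "\<mu> > 0"
    using pos by (simp add: \<mu>_def)
  have cost: "social_cost n m a b (\<lambda>k l. f k l + s * ?d k l) = social_cost n m a b f" for s
  proof (rule optimal_routing_cost_constant[OF opt balanced \<open>\<mu> > 0\<close>])
    show "feasible_routing n m dem (\<lambda>k l. f k l + \<mu> * ?d k l)"
      by (rule feasible_routing_add_swap_cycle[OF feas idx]) (use pos in \<open>auto simp: \<mu>_def\<close>)
    show "feasible_routing n m dem (\<lambda>k l. f k l + (- \<mu>) * ?d k l)"
      by (rule feasible_routing_add_swap_cycle[OF feas idx]) (use pos in \<open>auto simp: \<mu>_def\<close>)
  qed
  define t where "t = min (f i j) (f i' j')"
  define g where "g = (\<lambda>k l. f k l + t * ?d k l)"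
  have "feasible_routing n m dem g"
    unfolding g_def by (rule feasible_routing_add_swap_cycle[OF feas idx]) (use pos in \<open>auto simp: t_def\<close>)
  then have "optimal_routing n m dem a b g"
    using opt cost unfolding optimal_routing_def g_def by simp
  moreover have "routing_support n m g \<subseteq> routing_support n m f"
    using pos idx(5,6) by (auto simp: routing_support_def g_def swap_cycle_def t_def split: if_splits)
  moreover have "(i, j) \<notin> routing_support n m g \<or> (i', j') \<notin> routing_support n m g"
    using idx(5,6) by (auto simp: routing_support_def g_def swap_cycle_def t_def min_def)
  moreover have "(i, j) \<in> routing_support n m f" "(i', j') \<in> routing_support n m f"
    using pos idx by (simp_all add: routing_support_def)
  ultimately show ?thesis
    by blast
qed

lemma continuous_on_entry: "continuous_on S (\<lambda>f :: nat \<Rightarrow> nat \<Rightarrow> real. f i j)"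
proof -
  have "continuous_on S (\<lambda>f :: nat \<Rightarrow> nat \<Rightarrow> real. f i)"
    by (rule continuous_on_product_then_coordinatewise[OF continuous_on_id])
  then show ?thesis
    by (rule continuous_on_product_then_coordinatewise)
qed

lemma continuous_on_social_cost: "continuous_on S (social_cost n m a b)"
  unfolding social_cost_def latency_def by (intro continuous_intros continuous_on_entry)

lemma closed_feasible_routings: "closed {f. feasible_routing n m dem f}"
proof -
  have "{f. feasible_routing n m dem f} =
      (\<Inter>i\<in>{..<n}. \<Inter>j\<in>{..<m}. {f. 0 \<le> f i j}) \<inter> (\<Inter>j\<in>{..<m}. {f. (\<Sum>i<n. f i j) = dem j})"
    by (auto simp: feasible_routing_def)
  then show ?thesis
    by (simp only:) (intro closed_Int closed_INT ballI closed_Collect_le closed_Collect_eq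
        continuous_intros continuous_on_entry)
qed

lemma compact_PiE_PiE_atLeastAtMost:
  fixes B :: "nat \<Rightarrow> nat \<Rightarrow> real"
  shows "compact (PiE UNIV (\<lambda>i. PiE UNIV (\<lambda>j. {0..B i j})))"
proof -
  have row: "compact (PiE UNIV (\<lambda>j. {0..B i j}))" for i
    using compactin_PiE[of "\<lambda>j. euclidean" UNIV "\<lambda>j. {0..B i j}"]
    by (simp add: euclidean_product_topology)
  show ?thesis
    using compactin_PiE[of "\<lambda>i. euclidean" UNIV "\<lambda>i. PiE UNIV (\<lambda>j. {0..B i j})"]
    by (simp add: euclidean_product_topology row)
qed

lemma feasible_routing_le_demand:
  assumes "feasible_routing n m dem f" "i < n" "j < m"
  shows "f i j \<le> dem j"
proof -
  have "f i j = (\<Sum>k\<in>{i}. f k j)"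
    by simp
  also have "\<dots> \<le> (\<Sum>k<n. f k j)"
    by (rule sum_mono2) (use assms in \<open>auto simp: feasible_routing_def\<close>)
  finally show ?thesis
    using assms by (simp add: feasible_routing_def)
qed

lemma feasible_routing_exists:
  assumes "n \<ge> 1" "\<forall>j<m. dem j \<ge> 0"
  shows "feasible_routing n m dem (\<lambda>i j. if i = 0 then dem j else 0)"
  using assms by (auto simp: feasible_routing_def sum.lessThan_Suc_shift simp del: sum.lessThan_Suc)

lemma optimal_routing_exists:
  assumes "n \<ge> 1" "\<forall>j<m. dem j \<ge> 0"
  shows "\<exists>f. optimal_routing n m dem a b f"
proof -
  define S where "S = PiE UNIV (\<lambda>i. PiE UNIV (\<lambda>j. {0..if i < n \<and> j < m then dem j else 0}))
    \<inter> {f. feasible_routing n m dem f}"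
  have "compact S"
    unfolding S_def by (intro compact_Int_closed compact_PiE_PiE_atLeastAtMost closed_feasible_routings)
  define truncate where "truncate g = (\<lambda>i j. if i < n \<and> j < m then g i j else 0)" for g :: "nat \<Rightarrow> nat \<Rightarrow> real"
  have truncate_in_S: "truncate g \<in> S" if "feasible_routing n m dem g" for g
    using that feasible_routing_le_demand[OF that]
  proof -
    have "truncate g \<in> PiE UNIV (\<lambda>i. PiE UNIV (\<lambda>j. {0..if i < n \<and> j < m then dem j else 0}))"
      using that feasible_routing_le_demand[OF that]
      by (simp add: truncate_def PiE_UNIV_domain feasible_routing_def)
    moreover have "feasible_routing n m dem (truncate g)"
      using that by (simp add: truncate_def feasible_routing_def)
    ultimately show ?thesis
      by (simp add: S_def)
  qed
  have cost_truncate: "social_cost n m a b (truncate g) = social_cost n m a b g" for g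
    by (simp add: social_cost_def latency_def truncate_def)
  obtain f where "f \<in> S" and min: "\<forall>g\<in>S. social_cost n m a b f \<le> social_cost n m a b g"
    using continuous_attains_inf[OF \<open>compact S\<close> _ continuous_on_social_cost]
      truncate_in_S[OF feasible_routing_exists[OF assms]] by blast
  have "optimal_routing n m dem a b f"
    unfolding optimal_routing_def
  proof (intro conjI allI impI)
    show "feasible_routing n m dem f"
      using \<open>f \<in> S\<close> by (simp add: S_def)
    fix g assume "feasible_routing n m dem g"
    then show "social_cost n m a b f \<le> social_cost n m a b g"
      using min truncate_in_S cost_truncate by metis
  qed
  then show ?thesis
    by blast
qed

theorem corollary1:
  fixes n m :: nat and dem :: "nat \<Rightarrow> real" and a :: "nat \<Rightarrow> nat \<Rightarrow> real" and b :: "nat \<Rightarrow> real"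
  assumes "n \<ge> 1"
    and "\<forall>j<m. dem j \<ge> 0"
    and "\<forall>i<n. \<forall>j<m. a i j \<ge> 0"
    and "\<forall>i<n. b i \<ge> 0"
  shows "\<exists>f. feasible_routing n m dem f
           \<and> (\<forall>g. feasible_routing n m dem g \<longrightarrow> social_cost n m a b f \<le> social_cost n m a b g)
           \<and> \<not> (\<exists>j<m. \<exists>j'<m. \<exists>i<n. \<exists>i'<n. j \<noteq> j' \<and> i \<noteq> i' \<and>
                  f i j > 0 \<and> f i j' > 0 \<and> f i' j > 0 \<and> f i' j' > 0)"
proof -
  obtain f0 where "optimal_routing n m dem a b f0"
    using optimal_routing_exists[OF assms(1,2)] by blast
  then obtain f where opt: "optimal_routing n m dem a b f"
    and least: "\<And>g. optimal_routing n m dem a b g \<Longrightarrow>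
                  card (routing_support n m f) \<le> card (routing_support n m g)"
    using ex_has_least_nat[where m = "\<lambda>f. card (routing_support n m f)"] by metis
  have "\<not> support_has_4cycle n m f"
  proof
    assume "support_has_4cycle n m f"
    then obtain g where "optimal_routing n m dem a b g" "routing_support n m g \<subset> routing_support n m f"
      using optimal_routing_shrink_support[OF opt] by blast
    with least show False
      by (meson finite_routing_support psubset_card_mono leD)
  qed
  with opt show ?thesis
    unfolding optimal_routing_def support_has_4cycle_def by blast
qed

end
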